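(* There are $2^{\aleph_0}$ Epstein incomplete logics. More precisely, with $p,q$ distinct propositional letters, $p^0:=q\looparrowright p$, $p^{n+1}:=p\to p^n$ and $\Lambda_S:=\{q\looparrowright p^m:m\in S\}$: for every non-empty $S\subseteq\omega\setminus\{0\}$ the logic $\mathcal{F}\Lambda_S$ is Epstein incomplete, and the logics $\mathcal{F}\Lambda_S$ for distinct such $S$ are pairwise distinct.
   Context: Language: propositional letters $\Phi=\{p_0,p_1,\dots\}$; connectives $\neg$, $\lor,\wedge,\to,\leftrightarrow,\vartriangle,\looparrowright$; $\mathsf{FOR}$ the set of all formulas. An Epstein model is $\langle v,\mathfrak{R}\rangle$ with $v:\Phi\to\{0,1\}$ and $\mathfrak{R}\subseteq\mathsf{FOR}^2$ (an Epstein relation); truth: letters via $v$, boolean connectives classical, $\langle v,\mathfrak{R}\rangle\vDash\varphi\vartriangle\psi$ iff both true and $\langle\varphi,\psi\rangle\in\mathfrak{R}$; $\langle v,\mathfrak{R}\rangle\vDash\varphi\looparrowright\psi$ iff $\varphi\to\psi$ true and $\langle\varphi,\psi\rangle\in\mathfrak{R}$. $\mathfrak{R}\vDash\varphi$ iff true under every valuation. $\mathcal{F}$ is the least set containing all classical tautologies of the language and the axioms $(p\looparrowright q)\to(p\to q)$, $(p\vartriangle q)\leftrightarrow((p\looparrowright q)\wedge(p\wedge q))$, closed under uniform substitution and modus ponens; $\mathcal{F}\Lambda$ is the least set containing $\mathcal{F}\cup\Lambda$ closed under uniform substitution and modus ponens. A logic is a set of formulas containing $\mathcal{F}$ closed under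 uniform substitution and modus ponens. A logic $\lambda$ is Epstein complete iff there is a set $X$ of Epstein relations with $\lambda=\{\varphi:\mathfrak{R}\vDash\varphi\text{ for all }\mathfrak{R}\in X\}$; otherwise it is Epstein incomplete. *)

theory Defs
  imports Main
begin

text \<open>Formulas: letters p_n, negation, or, and, implication, equivalence,
  the Epstein conjunction (Tri, the triangle connective) and the Epstein
  implication (Loop, the looparrowright connective).\<close>
datatype form =
    Var nat
  | Neg form
  | Or form form
  | And form form
  | Imp form form
  | Iff form form
  | Tri form form
  | Loop form form

fun holds :: "(nat \<Rightarrow> bool) \<Rightarrow> (form \<times> form) set \<Rightarrow> form \<Rightarrow> bool" where
  "holds v R (Var n) = v n"
| "holds v R (Neg a) = (\<not> holds v R a)"
| "holds v R (Or a b) = (holds v R a \<or> holds v R b)"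
| "holds v R (And a b) = (holds v R a \<and> holds v R b)"
| "holds v R (Imp a b) = (holds v R a \<longrightarrow> holds v R b)"
| "holds v R (Iff a b) = (holds v R a \<longleftrightarrow> holds v R b)"
| "holds v R (Tri a b) = (holds v R a \<and> holds v R b \<and> (a, b) \<in> R)"
| "holds v R (Loop a b) = ((holds v R a \<longrightarrow> holds v R b) \<and> (a, b) \<in> R)"

definition valid_in :: "(form \<times> form) set \<Rightarrow> form \<Rightarrow> bool" where
  "valid_in R \<phi> \<longleftrightarrow> (\<forall>v. holds v R \<phi>)"

fun beval :: "(form \<Rightarrow> bool) \<Rightarrow> form \<Rightarrow> bool" where
  "beval f (Var n) = f (Var n)"
| "beval f (Neg a) = (\<not> beval f a)"
| "beval f (Or a b) = (beval f a \<or> beval f b)"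
| "beval f (And a b) = (beval f a \<and> beval f b)"
| "beval f (Imp a b) = (beval f a \<longrightarrow> beval f b)"
| "beval f (Iff a b) = (beval f a \<longleftrightarrow> beval f b)"
| "beval f (Tri a b) = f (Tri a b)"
| "beval f (Loop a b) = f (Loop a b)"

definition taut :: "form \<Rightarrow> bool" where
  "taut \<phi> \<longleftrightarrow> (\<forall>f. beval f \<phi>)"

fun subst :: "(nat \<Rightarrow> form) \<Rightarrow> form \<Rightarrow> form" where
  "subst \<sigma> (Var n) = \<sigma> n"
| "subst \<sigma> (Neg a) = Neg (subst \<sigma> a)"
| "subst \<sigma> (Or a b) = Or (subst \<sigma> a) (subst \<sigma> b)"
| "subst \<sigma> (And a b) = And (subst \<sigma> a) (subst \<sigma> b)"
| "subst \<sigma> (Imp a b) = Imp (subst \<sigma> a) (subst \<sigma> b)"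
| "subst \<sigma> (Iff a b) = Iff (subst \<sigma> a) (subst \<sigma> b)"
| "subst \<sigma> (Tri a b) = Tri (subst \<sigma> a) (subst \<sigma> b)"
| "subst \<sigma> (Loop a b) = Loop (subst \<sigma> a) (subst \<sigma> b)"

text \<open>F Lambda: least set containing the tautologies, the two axioms
  (with p = p_0, q = p_1) and Lambda, closed under uniform substitution and
  modus ponens. F itself is FL {}.\<close>
inductive_set FL :: "form set \<Rightarrow> form set" for \<Lambda> :: "form set" where
  taut: "taut \<phi> \<Longrightarrow> \<phi> \<in> FL \<Lambda>"
| ax1: "Imp (Loop (Var 0) (Var 1)) (Imp (Var 0) (Var 1)) \<in> FL \<Lambda>"
| ax2: "Iff (Tri (Var 0) (Var 1)) (And (Loop (Var 0) (Var 1)) (And (Var 0) (Var 1))) \<in> FL \<Lambda>"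
| hyp: "\<phi> \<in> \<Lambda> \<Longrightarrow> \<phi> \<in> FL \<Lambda>"
| sub: "\<phi> \<in> FL \<Lambda> \<Longrightarrow> subst \<sigma> \<phi> \<in> FL \<Lambda>"
| mp: "\<phi> \<in> FL \<Lambda> \<Longrightarrow> Imp \<phi> \<psi> \<in> FL \<Lambda> \<Longrightarrow> \<psi> \<in> FL \<Lambda>"

definition epstein_complete :: "form set \<Rightarrow> bool" where
  "epstein_complete L \<longleftrightarrow>
     (\<exists>X :: (form \<times> form) set set. L = {\<phi>. \<forall>R\<in>X. valid_in R \<phi>})"

fun ppow :: "nat \<Rightarrow> nat \<Rightarrow> nat \<Rightarrow> form" where
  "ppow a b 0 = Loop (Var b) (Var a)"
| "ppow a b (Suc n) = Imp (Var a) (ppow a b n)"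

definition LamS :: "nat \<Rightarrow> nat \<Rightarrow> nat set \<Rightarrow> form set" where
  "LamS a b S = {Loop (Var b) (ppow a b m) | m. m \<in> S}"

end

theory Submission
  imports Defs
begin

text \<open>Interpret \<open>x \<looparrowright> y\<close> as the implication \<open>x \<rightarrow> y\<close> when \<open>y\<close> has the shape
  \<open>p \<rightarrow> \<dots> \<rightarrow> p \<rightarrow> (x \<looparrowright> p)\<close> with \<open>m \<in> S\<close> arrows, and as the conjunction \<open>x \<and> y\<close>
  otherwise. For \<open>0 \<notin> S\<close> every substitution instance of an axiom of \<open>\<F>\<Lambda>\<^sub>S\<close> is true
  under this non-Epstein semantics, so it is sound for \<open>\<F>\<Lambda>\<^sub>S\<close>. Every Epstein relation
  validating \<open>q \<looparrowright> p\<^sup>m\<close> contains \<open>(q, p)\<close> and hence validates \<open>(q \<rightarrow> p) \<rightarrow> (q \<looparrowright> p)\<close>,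
  which fails in the semantics for \<open>S\<close> when all letters are false; likewise
  \<open>q \<looparrowright> p\<^sup>k\<close> fails in the semantics for \<open>S\<close> whenever \<open>k \<notin> S\<close>.\<close>

fun loop_power :: "form \<Rightarrow> form \<Rightarrow> nat \<Rightarrow> form" where
  "loop_power q p 0 = Loop q p"
| "loop_power q p (Suc n) = Imp p (loop_power q p n)"

definition power_pair :: "nat set \<Rightarrow> form \<Rightarrow> form \<Rightarrow> bool" where
  "power_pair S x y \<longleftrightarrow> (\<exists>p m. m \<in> S \<and> y = loop_power x p m)"

fun holds_S :: "nat set \<Rightarrow> (nat \<Rightarrow> bool) \<Rightarrow> form \<Rightarrow> bool" where
  "holds_S S v (Var n) = v n"
| "holds_S S v (Neg a) = (\<not> holds_S S v a)"
| "holds_S S v (Or a b) = (holds_S S v a \<or> holds_S S v b)"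
| "holds_S S v (And a b) = (holds_S S v a \<and> holds_S S v b)"
| "holds_S S v (Imp a b) = (holds_S S v a \<longrightarrow> holds_S S v b)"
| "holds_S S v (Iff a b) = (holds_S S v a \<longleftrightarrow> holds_S S v b)"
| "holds_S S v (Tri a b) = (holds_S S v a \<and> holds_S S v b)"
| "holds_S S v (Loop a b) =
     (if power_pair S a b then holds_S S v a \<longrightarrow> holds_S S v b
      else holds_S S v a \<and> holds_S S v b)"

lemma subst_subst: "subst \<sigma> (subst \<tau> \<phi>) = subst (\<lambda>n. subst \<sigma> (\<tau> n)) \<phi>"
  by (induction \<phi>) simp_all

lemma subst_Var: "subst Var \<phi> = \<phi>"
  by (induction \<phi>) simp_all

lemma holds_S_subst_eq_beval:
  "holds_S S v (subst \<sigma> \<phi>) = beval (\<lambda>\<psi>. holds_S S v (subst \<sigma> \<psi>)) \<phi>"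
  by (induction \<phi>) simp_all

lemma ppow_eq_loop_power: "ppow a b m = loop_power (Var b) (Var a) m"
  by (induction m) simp_all

lemma subst_loop_power: "subst \<sigma> (loop_power q p m) = loop_power (subst \<sigma> q) (subst \<sigma> p) m"
  by (induction m) simp_all

lemma loop_power_neq_Var: "loop_power q p m \<noteq> Var n"
  by (cases m) simp_all

lemma loop_power_inj: "loop_power q p m = loop_power q p' n \<Longrightarrow> m = n"
proof (induction m arbitrary: n)
  case 0 then show ?case by (cases n) auto
next
  case (Suc m) then show ?case by (cases n) auto
qed

lemma holds_S_loop_power:
  assumes "m \<noteq> 0" and "holds_S S v q"
  shows "holds_S S v (loop_power q p m)"
proof -
  have "holds_S S v p \<longrightarrow> holds_S S v (loop_power q p n)" for n
    using \<open>holds_S S v q\<close> by (induction n) auto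
  with \<open>m \<noteq> 0\<close> show ?thesis by (cases m) auto
qed

lemma FL_LamS_holds_S:
  assumes "\<phi> \<in> FL (LamS a b S)" and "0 \<notin> S"
  shows "holds_S S v (subst \<sigma> \<phi>)"
  using assms
proof (induction \<phi> arbitrary: \<sigma> v rule: FL.induct)
  case (taut \<phi>)
  then show ?case unfolding taut_def by (subst holds_S_subst_eq_beval) blast
next
  case (hyp \<phi>)
  then obtain m where "m \<in> S" and \<phi>: "\<phi> = Loop (Var b) (loop_power (Var b) (Var a) m)"
    by (auto simp: LamS_def ppow_eq_loop_power)
  moreover from \<open>m \<in> S\<close> \<open>0 \<notin> S\<close> have "m \<noteq> 0" by (cases m) auto
  ultimately show ?case by (auto simp: subst_loop_power power_pair_def intro: holds_S_loop_power)
next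
  case (sub \<phi> \<tau>) then show ?case by (simp add: subst_subst)
next
  case (mp \<phi> \<psi>) then show ?case by fastforce
qed auto

lemma holds_ppow_rel: "v a \<Longrightarrow> holds v R (ppow a b n) \<Longrightarrow> (Var b, Var a) \<in> R"
  by (induction n) auto

lemma FL_LamS_incomplete:
  assumes "m \<in> S" and "0 \<notin> S"
  shows "\<not> epstein_complete (FL (LamS a b S))"
proof
  assume "epstein_complete (FL (LamS a b S))"
  then obtain X where X: "FL (LamS a b S) = {\<phi>. \<forall>R\<in>X. valid_in R \<phi>}"
    by (auto simp: epstein_complete_def)
  define \<chi> where "\<chi> = Imp (Imp (Var b) (Var a)) (Loop (Var b) (Var a))"
  have "\<chi> \<in> FL (LamS a b S)"
    unfolding X
  proof safe
    fix R assume "R \<in> X"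
    moreover have "Loop (Var b) (ppow a b m) \<in> FL (LamS a b S)"
      using \<open>m \<in> S\<close> by (auto intro: FL.hyp simp: LamS_def)
    ultimately have "holds (\<lambda>_. True) R (Loop (Var b) (ppow a b m))"
      using X by (auto simp: valid_in_def)
    then have "(Var b, Var a) \<in> R"
      using holds_ppow_rel[of "\<lambda>_. True" a R b m] by simp
    then show "valid_in R \<chi>" by (simp add: valid_in_def \<chi>_def)
  qed
  then have "holds_S S (\<lambda>_. False) \<chi>"
    using FL_LamS_holds_S[of \<chi> a b S _ Var] \<open>0 \<notin> S\<close> by (simp add: subst_Var)
  moreover have "\<not> power_pair S (Var b) (Var a)"
    by (auto simp: power_pair_def loop_power_neq_Var[symmetric])
  ultimately show False by (simp add: \<chi>_def)
qed

lemma FL_LamS_neq: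
  assumes "k \<in> S" and "k \<notin> T" and "0 \<notin> T"
  shows "FL (LamS a b S) \<noteq> FL (LamS a b T)"
proof
  have "\<not> power_pair T (Var b) (ppow a b k)"
    using \<open>k \<notin> T\<close> by (auto simp: power_pair_def ppow_eq_loop_power dest: loop_power_inj)
  then have "\<not> holds_S T (\<lambda>_. False) (Loop (Var b) (ppow a b k))"
    by simp
  moreover assume "FL (LamS a b S) = FL (LamS a b T)"
  moreover have "Loop (Var b) (ppow a b k) \<in> FL (LamS a b S)"
    using \<open>k \<in> S\<close> by (auto intro: FL.hyp simp: LamS_def)
  ultimately show False
    using FL_LamS_holds_S[of _ a b T _ Var] \<open>0 \<notin> T\<close> by (metis subst_Var)
qed

theorem mainTheorem10:
  fixes a b :: nat
  assumes "a \<noteq> b"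
  shows "(\<forall>S :: nat set. S \<noteq> {} \<and> 0 \<notin> S \<longrightarrow> \<not> epstein_complete (FL (LamS a b S)))
       \<and> (\<forall>S T :: nat set. S \<noteq> {} \<and> 0 \<notin> S \<and> T \<noteq> {} \<and> 0 \<notin> T \<and> S \<noteq> T
            \<longrightarrow> FL (LamS a b S) \<noteq> FL (LamS a b T))"
proof (intro conjI allI impI)
  fix S :: "nat set"
  assume "S \<noteq> {} \<and> 0 \<notin> S"
  then show "\<not> epstein_complete (FL (LamS a b S))"
    using FL_LamS_incomplete by blast
next
  fix S T :: "nat set"
  assume "S \<noteq> {} \<and> 0 \<notin> S \<and> T \<noteq> {} \<and> 0 \<notin> T \<and> S \<noteq> T"
  then show "FL (LamS a b S) \<noteq> FL (LamS a b T)"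
    using FL_LamS_neq[of _ S T a b] FL_LamS_neq[of _ T S a b] by blast
qed

end
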